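(* Let $X$ be an infinite dimensional real Banach space. Then there exists a closed, bounded, convex set $K\subset X$ that is not remotal.
   Context: For a bounded set $C$ in a Banach space $Z$ and $z\in Z$, let $D(z,C)=\sup\{\|z-c\|: c\in C\}$. $C$ is remotal from $z$ if there exists $c_0\in C$ with $\|z-c_0\|=D(z,C)$; $C$ is remotal if it is remotal from every point of $Z$. *)

theory Defs
  imports "HOL-Analysis.Analysis"
begin

definition farthest_dist :: "'a::real_normed_vector \<Rightarrow> 'a set \<Rightarrow> real" where
  "farthest_dist z C = (SUP c\<in>C. norm (z - c))"

definition remotal_from :: "'a::real_normed_vector \<Rightarrow> 'a set \<Rightarrow> bool" where
  "remotal_from z C \<longleftrightarrow> (\<exists>c0\<in>C. norm (z - c0) = farthest_dist z C)"

definition remotal :: "'a::real_normed_vector set \<Rightarrow> bool" where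
  "remotal C \<longleftrightarrow> (\<forall>z. remotal_from z C)"

definition infinite_dimensional :: "'a::real_vector itself \<Rightarrow> bool" where
  "infinite_dimensional TYPE('a) \<longleftrightarrow> \<not> (\<exists>B::'a set. finite B \<and> span B = UNIV)"

end

theory Submission
  imports Defs
begin

(* Let X be a normalised basic sequence with basis constant C, i.e. unit vectors with
   |sum_{i<M} c_i X_i| <= C |sum_{i<N} c_i X_i| whenever M <= N.  Shrink it to
   y_i = (1 - 1/(i+2)) X_i and let K be the closed convex hull of the y_i.  The norms
   |y_i| approach 1, so the farthest distance from the origin to K is at least 1; but no
   point of K has norm 1: a point of norm close to 1 must put almost no weight on the
   first M vectors, and the basis constant shows that the truncation of a nearby convex
   combination then stays small.  Hence K is not remotal from the origin.

   Finally the set K is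
   studied. *)

definition contractive_functional :: "('a::real_normed_vector \<Rightarrow> real) \<Rightarrow> bool" where
  "contractive_functional f \<longleftrightarrow> linear f \<and> (\<forall>x. \<bar>f x\<bar> \<le> norm x)"

text \<open>Graphs of partial linear functionals (linear subspaces of \<open>'a \<times> real\<close>) that are dominated
  by the norm and take the value \<open>norm x0\<close> at \<open>x0\<close>; a maximal one is the graph of the
  functional sought in the Hahn--Banach theorem.\<close>
definition dominated_graphs :: "'a::real_normed_vector \<Rightarrow> ('a \<times> real) set set" where
  "dominated_graphs x0 =
     {G. subspace G \<and> (x0, norm x0) \<in> G \<and> (\<forall>(s, u) \<in> G. u \<le> norm s)}"

lemma dominated_graphs_nonempty: "span {(x0, norm x0)} \<in> dominated_graphs x0"
proof -
  have "u \<le> norm s" if su: "(s, u) \<in> span {(x0, norm x0)}" for s u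
  proof -
    obtain k where "s = k *\<^sub>R x0" "u = k * norm x0"
      using su by (auto simp: span_singleton)
    then show ?thesis by (simp add: mult_right_mono)
  qed
  then show ?thesis
    unfolding dominated_graphs_def by (auto simp: span_base)
qed

lemma dominated_graphs_chain_Union:
  assumes "\<C> \<noteq> {}" and chain: "subset.chain (dominated_graphs x0) \<C>"
  shows "\<Union>\<C> \<in> dominated_graphs x0"
proof -
  have members: "\<And>G. G \<in> \<C> \<Longrightarrow> G \<in> dominated_graphs x0"
    and total: "\<And>G H. G \<in> \<C> \<Longrightarrow> H \<in> \<C> \<Longrightarrow> G \<subseteq> H \<or> H \<subseteq> G"
    using chain by (auto simp: subset_chain_def)
  obtain G0 where "G0 \<in> \<C>" using assms(1) by blast
  have "subspace (\<Union>\<C>)"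
    unfolding subspace_def
  proof (intro conjI ballI allI)
    have "subspace G0"
      using members \<open>G0 \<in> \<C>\<close> by (auto simp: dominated_graphs_def)
    then show "0 \<in> \<Union>\<C>"
      using \<open>G0 \<in> \<C>\<close> subspace_0 by blast
  next
    fix p q assume "p \<in> \<Union>\<C>" "q \<in> \<Union>\<C>"
    then obtain G H where "G \<in> \<C>" "H \<in> \<C>" "p \<in> G" "q \<in> H" by blast
    moreover have "subspace G" "subspace H"
      using members \<open>G \<in> \<C>\<close> \<open>H \<in> \<C>\<close> by (auto simp: dominated_graphs_def)
    ultimately show "p + q \<in> \<Union>\<C>"
      using total[of G H] subspace_add by (metis UnionI subsetD)
  next
    fix c p assume "p \<in> \<Union>\<C>"
    then obtain G where "G \<in> \<C>" "p \<in> G" by blast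
    moreover have "subspace G"
      using members \<open>G \<in> \<C>\<close> by (auto simp: dominated_graphs_def)
    ultimately show "c *\<^sub>R p \<in> \<Union>\<C>"
      using subspace_scale by blast
  qed
  moreover have "(x0, norm x0) \<in> \<Union>\<C>"
    using members \<open>G0 \<in> \<C>\<close> by (auto simp: dominated_graphs_def)
  moreover have "u \<le> norm s" if "(s, u) \<in> \<Union>\<C>" for s u
    using that members by (auto simp: dominated_graphs_def)
  ultimately show ?thesis
    unfolding dominated_graphs_def by blast
qed

text \<open>Rescaling reduces the cases \<open>a > 0\<close>, \<open>a < 0\<close> to the bounds.\<close>
lemma dominated_extension_value:
  fixes G :: "('a::real_normed_vector \<times> real) set"
  assumes G: "subspace G" and su: "(s, u) \<in> G"
    and dominated: "\<And>s u. (s, u) \<in> G \<Longrightarrow> u \<le> norm s"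
    and lower: "\<And>s u. (s, u) \<in> G \<Longrightarrow> u - norm (s - y) \<le> c"
    and upper: "\<And>s u. (s, u) \<in> G \<Longrightarrow> c \<le> norm (s + y) - u"
  shows "u + a * c \<le> norm (s + a *\<^sub>R y)"
proof (cases a "0::real" rule: linorder_cases)
  case less
  define b where "b = - a"
  have b: "b > 0" using less by (simp add: b_def)
  have "(inverse b *\<^sub>R s, inverse b * u) \<in> G"
    using subspace_scale[OF G su, of "inverse b"] by simp
  then have "inverse b * u - norm (inverse b *\<^sub>R s - y) \<le> c"
    using lower by blast
  then have "b * (inverse b * u - norm (inverse b *\<^sub>R s - y)) \<le> b * c"
    using b by (intro mult_left_mono) auto
  moreover have "b * norm (inverse b *\<^sub>R s - y) = norm (s + a *\<^sub>R y)"
  proof -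
    have "s + a *\<^sub>R y = b *\<^sub>R (inverse b *\<^sub>R s - y)"
      using b by (simp add: algebra_simps b_def)
    then show ?thesis using b by simp
  qed
  moreover have "b * (inverse b * u) = u" using b by simp
  moreover have "b * c = - (a * c)" by (simp add: b_def)
  ultimately show ?thesis
    by (simp only: right_diff_distrib)
next
  case equal
  then show ?thesis
    using dominated su by simp
next
  case greater
  have "(inverse a *\<^sub>R s, inverse a * u) \<in> G"
    using subspace_scale[OF G su, of "inverse a"] by simp
  then have "c \<le> norm (inverse a *\<^sub>R s + y) - inverse a * u"
    using upper by blast
  then have "a * c \<le> a * (norm (inverse a *\<^sub>R s + y) - inverse a * u)"
    using greater by (intro mult_left_mono) auto
  moreover have "a * norm (inverse a *\<^sub>R s + y) = norm (s + a *\<^sub>R y)"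
  proof -
    have "s + a *\<^sub>R y = a *\<^sub>R (inverse a *\<^sub>R s + y)"
      using greater by (simp add: algebra_simps)
    then show ?thesis using greater by simp
  qed
  moreover have "a * (inverse a * u) = u" using greater by simp
  ultimately show ?thesis
    by (simp only: right_diff_distrib)
qed

text \<open>Such a value \<open>c\<close> exists: by the triangle inequality every lower bound is below every
  upper bound, so their supremum works.\<close>
lemma dominated_extension_constant:
  fixes G :: "('a::real_normed_vector \<times> real) set"
  assumes sub: "subspace G" and dominated: "\<And>s u. (s, u) \<in> G \<Longrightarrow> u \<le> norm s"
  obtains c where "\<And>s u. (s, u) \<in> G \<Longrightarrow> u - norm (s - y) \<le> c"
    and "\<And>t v. (t, v) \<in> G \<Longrightarrow> c \<le> norm (t + y) - v"
proof -
  have gap: "u - norm (s - y) \<le> norm (t + y) - v" if "(s, u) \<in> G" "(t, v) \<in> G" for s u t v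
  proof -
    have "(s + t, u + v) \<in> G" using subspace_add[OF sub that] by simp
    then have "u + v \<le> norm (s + t)" using dominated by blast
    also have "\<dots> \<le> norm (s - y) + norm (t + y)"
      using norm_triangle_ineq[of "s - y" "t + y"] by simp
    finally show ?thesis by simp
  qed
  have "(0, 0) \<in> G" using subspace_0[OF sub] by (simp add: zero_prod_def)
  define c where "c = (SUP p\<in>G. snd p - norm (fst p - y))"
  have "u - norm (s - y) \<le> c" if "(s, u) \<in> G" for s u
  proof -
    have "bdd_above ((\<lambda>p. snd p - norm (fst p - y)) ` G)"
      using gap[OF _ \<open>(0, 0) \<in> G\<close>] by (intro bdd_aboveI) auto
    then have "snd (s, u) - norm (fst (s, u) - y) \<le> c"
      unfolding c_def by (rule cSUP_upper[OF that])
    then show ?thesis by simp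
  qed
  moreover have "c \<le> norm (t + y) - v" if "(t, v) \<in> G" for t v
    unfolding c_def using gap[OF _ that] \<open>(0, 0) \<in> G\<close> by (intro cSUP_least) auto
  ultimately show ?thesis by (rule that)
qed

text \<open>A dominated graph that misses some abscissa \<open>y\<close> is not maximal: adjoining \<open>(y, c)\<close>
  for a constant \<open>c\<close> as above keeps it dominated.\<close>
lemma dominated_graph_extend:
  assumes G: "G \<in> dominated_graphs x0" and y: "y \<notin> fst ` G"
  shows "\<exists>G' \<in> dominated_graphs x0. G \<subset> G'"
proof -
  have sub: "subspace G" and x0: "(x0, norm x0) \<in> G"
    and dominated: "\<And>s u. (s, u) \<in> G \<Longrightarrow> u \<le> norm s"
    using G by (auto simp: dominated_graphs_def)
  obtain c where lower: "\<And>s u. (s, u) \<in> G \<Longrightarrow> u - norm (s - y) \<le> c"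
    and upper: "\<And>t v. (t, v) \<in> G \<Longrightarrow> c \<le> norm (t + y) - v"
    using dominated_extension_constant[OF sub dominated] by blast
  define G' where "G' = span (insert (y, c) G)"
  have G'_dominated: "u' \<le> norm s'" if mem: "(s', u') \<in> G'" for s' u'
  proof -
    have span_G: "span G = G" using sub by simp
    obtain a where "(s', u') - a *\<^sub>R (y, c) \<in> span G"
      using mem unfolding G'_def span_breakdown_eq ..
    then have "(s' - a *\<^sub>R y, u' - a * c) \<in> G"
      unfolding span_G by simp
    from dominated_extension_value[OF sub this dominated lower upper, of a]
    show ?thesis by simp
  qed
  have "subspace G'" "(x0, norm x0) \<in> G'"
    using x0 by (simp_all add: G'_def span_base)
  then have "G' \<in> dominated_graphs x0"
    using G'_dominated unfolding dominated_graphs_def by blast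
  moreover have "G \<subset> G'"
  proof -
    have "G \<subseteq> G'"
      unfolding G'_def by (meson span_superset subset_insertI subset_trans)
    moreover have "(y, c) \<in> G'" "(y, c) \<notin> G"
      using y by (force simp: G'_def span_base)+
    ultimately show ?thesis by blast
  qed
  ultimately show ?thesis by blast
qed

lemma norming_functional:
  fixes x0 :: "'a::real_normed_vector"
  obtains f where "contractive_functional f" "f x0 = norm x0"
proof -
  have "\<exists>M \<in> dominated_graphs x0. \<forall>G \<in> dominated_graphs x0. M \<subseteq> G \<longrightarrow> G = M"
  proof (rule subset_Zorn_nonempty)
    show "dominated_graphs x0 \<noteq> {}"
      using dominated_graphs_nonempty by blast
  qed (rule dominated_graphs_chain_Union)
  then obtain M where M: "M \<in> dominated_graphs x0"
    and maximal: "\<And>G. G \<in> dominated_graphs x0 \<Longrightarrow> M \<subseteq> G \<Longrightarrow> G = M"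
    by blast
  have sub: "subspace M" and x0: "(x0, norm x0) \<in> M"
    and dominated: "\<And>s u. (s, u) \<in> M \<Longrightarrow> u \<le> norm s"
    using M by (auto simp: dominated_graphs_def)
  have total: "\<exists>u. (y, u) \<in> M" for y
    using dominated_graph_extend[OF M, of y] maximal by force
  have unique: "u = v" if "(s, u) \<in> M" "(s, v) \<in> M" for s u v
  proof -
    have "(0, u - v) \<in> M" "(0, v - u) \<in> M"
      using subspace_diff[OF sub that] subspace_diff[OF sub that(2,1)] by simp_all
    then show ?thesis using dominated[of 0 "u - v"] dominated[of 0 "v - u"] by simp
  qed
  define f where "f y = (THE u. (y, u) \<in> M)" for y
  have graph: "(y, u) \<in> M \<longleftrightarrow> f y = u" for y u
    using total[of y] unique unfolding f_def by (metis theI)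
  have "linear f"
  proof (rule linearI)
    show "f (a + b) = f a + f b" for a b
      using subspace_add[OF sub, of "(a, f a)" "(b, f b)"] graph by simp
    show "f (c *\<^sub>R a) = c *\<^sub>R f a" for c a
      using subspace_scale[OF sub, of "(a, f a)" c] graph by simp
  qed
  moreover have "\<bar>f x\<bar> \<le> norm x" for x
    using dominated[of x "f x"] dominated[of "- x" "f (- x)"] graph linear_neg[OF \<open>linear f\<close>]
    by fastforce
  ultimately have "contractive_functional f"
    by (simp add: contractive_functional_def)
  moreover have "f x0 = norm x0" using x0 graph by blast
  ultimately show ?thesis by (rule that)
qed

text \<open>Induction on the functionals: adding one
  functional enlarges a covering span by at most one vector.\<close>
lemma common_kernel_not_in_finite_span:
  fixes \<Phi> :: "('a::real_vector \<Rightarrow> real) set"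
  assumes inf: "infinite_dimensional TYPE('a)"
    and "finite \<Phi>" and "\<And>f. f \<in> \<Phi> \<Longrightarrow> linear f" and "finite B"
  shows "\<not> {x. \<forall>f\<in>\<Phi>. f x = 0} \<subseteq> span B"
  using assms(2-4)
proof (induction \<Phi> arbitrary: B rule: finite_induct)
  case empty
  then show ?case
    using inf by (auto simp: infinite_dimensional_def)
next
  case (insert g \<Phi>)
  let ?W = "{x. \<forall>f\<in>\<Phi>. f x = 0}"
  show ?case
  proof
    assume sub: "{x. \<forall>f\<in>insert g \<Phi>. f x = 0} \<subseteq> span B"
    show False
    proof (cases "\<forall>w\<in>?W. g w = 0")
      case True
      then have "?W \<subseteq> span B" using sub by auto
      then show False using insert by blast
    next
      case False
      then obtain w0 where w0: "w0 \<in> ?W" "g w0 \<noteq> 0" by blast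
      have "w \<in> span (insert w0 B)" if w: "w \<in> ?W" for w
      proof -
        let ?k = "g w / g w0"
        have "f (w - ?k *\<^sub>R w0) = 0" if "f \<in> insert g \<Phi>" for f
          using that w w0 insert.prems(1)[of f] by (auto simp: linear_diff linear_scale)
        then have "w - ?k *\<^sub>R w0 \<in> span B" using sub by blast
        then show ?thesis using span_breakdown_eq by blast
      qed
      then show False using insert by blast
    qed
  qed
qed

lemma common_kernel_nonzero:
  fixes \<Phi> :: "('a::real_vector \<Rightarrow> real) set"
  assumes "infinite_dimensional TYPE('a)" and "finite \<Phi>" and "\<And>f. f \<in> \<Phi> \<Longrightarrow> linear f"
  obtains x where "x \<noteq> 0" "\<And>f. f \<in> \<Phi> \<Longrightarrow> f x = 0"
  using common_kernel_not_in_finite_span[OF assms, of "{}"] by auto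

text \<open>If the unit ball of a subspace \<open>E\<close> is compact, finitely many contractive functionals
  \<open>1/2\<close>-norm \<open>E\<close>: take norming functionals at the centres of a finite \<open>1/2\<close>-net of the unit sphere of \<open>E\<close>.\<close>
lemma finite_norming_set:
  fixes E :: "'a::real_normed_vector set"
  assumes E: "subspace E" and cpt: "compact {u \<in> E. norm u \<le> 1}"
  obtains \<Phi> where "finite \<Phi>" "\<And>f. f \<in> \<Phi> \<Longrightarrow> contractive_functional f"
    "\<And>u. u \<in> E \<Longrightarrow> u \<noteq> 0 \<Longrightarrow> \<exists>f\<in>\<Phi>. norm u \<le> 2 * \<bar>f u\<bar>"
proof -
  define S where "S = {u \<in> E. norm u \<le> 1} \<inter> {u. norm u = 1}"
  have "compact S"
    unfolding S_def using cpt by (intro compact_Int_closed closed_Collect_eq continuous_intros)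
  then obtain C where C: "C \<subseteq> S" "finite C" "S \<subseteq> (\<Union>c\<in>C. ball c (1/2))"
    by (rule compactE_image[of S S "\<lambda>c. ball c (1/2)"]) force+
  obtain h :: "'a \<Rightarrow> 'a \<Rightarrow> real" where h: "\<And>c. contractive_functional (h c)" "\<And>c. h c c = norm c"
    using norming_functional by metis
  have "\<exists>f\<in>h ` C. norm u \<le> 2 * \<bar>f u\<bar>" if u: "u \<in> E" "u \<noteq> 0" for u
  proof -
    define w where "w = u /\<^sub>R norm u"
    have "w \<in> S"
      unfolding S_def w_def using u subspace_scale[OF E] by simp
    then obtain e where e: "e \<in> C" "norm (w - e) < 1/2"
      using C by (auto simp: dist_norm norm_minus_commute)
    have e1: "norm e = 1" using e C by (auto simp: S_def)
    have lin: "linear (h e)" and bound: "\<bar>h e (w - e)\<bar> \<le> norm (w - e)"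
      using h(1)[of e] by (auto simp: contractive_functional_def)
    have "h e w = h e e + h e (w - e)"
      using linear_add[OF lin, of e "w - e"] by simp
    then have "1/2 \<le> h e w"
      using bound e(2) h(2)[of e] e1 by linarith
    moreover have "h e u = norm u * h e w"
      using linear_scale[OF lin, of "norm u" w] u by (simp add: w_def)
    ultimately have "norm u \<le> 2 * h e u"
      using mult_left_mono[of "1/2" "h e w" "norm u"] by simp
    then show ?thesis using e(1) by force
  qed
  moreover have "finite (h ` C)" using C(2) by simp
  ultimately show ?thesis
    using h(1) by (intro that[of "h ` C"]) auto
qed

text \<open>Compactness of the unit ball survives adjoining a unit vector \<open>v\<close> whose addition cannot
  shrink norms by more than a factor \<open>2\<close>: the new unit ball is a closed part of the continuous
  image of (old ball) \<open>\<times> [-3, 3]\<close> under \<open>(e, t) \<mapsto> 2e + t v\<close>.\<close>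
lemma compact_unit_ball_insert:
  fixes E :: "'a::real_normed_vector set"
  assumes E: "subspace E" and cpt: "compact {u \<in> E. norm u \<le> 1}" and v: "norm v = 1"
    and separated: "\<And>e t. e \<in> E \<Longrightarrow> norm e \<le> 2 * norm (e + t *\<^sub>R v)"
  shows "compact {u \<in> span (insert v E). norm u \<le> 1}"
proof -
  define B where "B = {u \<in> E. norm u \<le> 1}"
  define h where "h = (\<lambda>p::'a \<times> real. 2 *\<^sub>R fst p + snd p *\<^sub>R v)"
  have "{u \<in> span (insert v E). norm u \<le> 1} = h ` (B \<times> {-3..3}) \<inter> cball 0 1"
  proof (intro equalityI subsetI)
    fix u assume u: "u \<in> {u \<in> span (insert v E). norm u \<le> 1}"
    have span_E: "span E = E" using E by simp
    have "u \<in> span (insert v E)" using u by simp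
    then obtain k where "u - k *\<^sub>R v \<in> span E"
      unfolding span_breakdown_eq ..
    then have k: "u - k *\<^sub>R v \<in> E" unfolding span_E .
    define e where "e = u - k *\<^sub>R v"
    have ne: "norm e \<le> 2"
      using separated[OF k, of k] u by (simp add: e_def)
    have "norm (k *\<^sub>R v) \<le> norm u + norm e"
      using norm_triangle_ineq4[of u e] by (simp add: e_def)
    then have "\<bar>k\<bar> \<le> 3" using v ne u by simp
    moreover have "(1/2) *\<^sub>R e \<in> B"
      using k ne subspace_scale[OF E] by (simp add: B_def e_def)
    moreover have "u = h ((1/2) *\<^sub>R e, k)" by (simp add: h_def e_def)
    ultimately show "u \<in> h ` (B \<times> {-3..3}) \<inter> cball 0 1"
      using u by force
  next
    fix u assume "u \<in> h ` (B \<times> {-3..3}) \<inter> cball 0 1"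
    then obtain p where p: "p \<in> B \<times> {-3..3}" "u = h p" "norm u \<le> 1"
      by auto
    have "fst p \<in> span (insert v E)"
      using p(1) span_superset by (force simp: B_def)
    then have "h p \<in> span (insert v E)"
      unfolding h_def by (simp add: span_add span_scale span_base)
    then show "u \<in> {u \<in> span (insert v E). norm u \<le> 1}"
      using p by simp
  qed
  moreover have "compact (h ` (B \<times> {-3..3}))"
    unfolding h_def using cpt
    by (intro compact_continuous_image continuous_intros compact_Times) (auto simp: B_def)
  ultimately show ?thesis
    by (simp add: compact_Int_closed)
qed

definition mazur_stage :: "nat \<Rightarrow> (nat \<Rightarrow> 'a::real_normed_vector) \<Rightarrow> ('a \<Rightarrow> real) set \<Rightarrow> bool" where
  "mazur_stage n x \<Phi> \<longleftrightarrow>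
     finite \<Phi> \<and> (\<forall>f\<in>\<Phi>. contractive_functional f) \<and> (\<forall>i<n. norm (x i) = 1) \<and>
     (\<forall>u\<in>span (x ` {..<n}). u \<noteq> 0 \<longrightarrow> (\<exists>f\<in>\<Phi>. norm u \<le> 2 * \<bar>f u\<bar>)) \<and>
     compact {u \<in> span (x ` {..<n}). norm u \<le> 1}"

lemma mazur_stage_0: "mazur_stage 0 x {}"
proof -
  have "{u \<in> span (x ` {..<0}). norm u \<le> 1} = {0}" by auto
  then show ?thesis by (simp add: mazur_stage_def)
qed

lemma span_insert_span: "span (insert v (span X)) = span (insert v X)"
  by (auto simp: span_breakdown_eq span_span)

text \<open>One step of Mazur's construction: the next vector \<open>v\<close> is a unit vector in the common
  kernel of \<open>\<Phi>\<close>, and \<open>\<Phi>\<close> is enlarged by a finite set norming the new span.\<close>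
lemma mazur_stage_step:
  fixes x :: "nat \<Rightarrow> 'a::real_normed_vector"
  assumes inf: "infinite_dimensional TYPE('a)"
    and stage: "mazur_stage n x \<Phi>"
  obtains v \<Phi>' where "mazur_stage (Suc n) (x(n := v)) \<Phi>'" "\<Phi> \<subseteq> \<Phi>'"
    "\<And>f. f \<in> \<Phi> \<Longrightarrow> f v = 0"
proof -
  define E where "E = span (x ` {..<n})"
  have fin: "finite \<Phi>" and contr: "\<And>f. f \<in> \<Phi> \<Longrightarrow> contractive_functional f"
    and units: "\<And>i. i < n \<Longrightarrow> norm (x i) = 1"
    and norming: "\<And>u. u \<in> E \<Longrightarrow> u \<noteq> 0 \<Longrightarrow> \<exists>f\<in>\<Phi>. norm u \<le> 2 * \<bar>f u\<bar>"
    and cpt: "compact {u \<in> E. norm u \<le> 1}"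
    using stage by (auto simp: mazur_stage_def E_def)
  have lin: "\<And>f. f \<in> \<Phi> \<Longrightarrow> linear f"
    using contr by (simp add: contractive_functional_def)
  obtain z where "z \<noteq> 0" "\<And>f. f \<in> \<Phi> \<Longrightarrow> f z = 0"
    using common_kernel_nonzero[OF inf fin lin] by blast
  define v where "v = z /\<^sub>R norm z"
  have v: "norm v = 1" using \<open>z \<noteq> 0\<close> by (simp add: v_def)
  have kills: "f v = 0" if "f \<in> \<Phi>" for f
    using \<open>f \<in> \<Phi> \<Longrightarrow> f z = 0\<close>[OF that] linear_scale[OF lin[OF that]] by (simp add: v_def)
  have separated: "norm e \<le> 2 * norm (e + t *\<^sub>R v)" if e: "e \<in> E" for e t
  proof (cases "e = 0")
    case False
    then obtain f where f: "f \<in> \<Phi>" "norm e \<le> 2 * \<bar>f e\<bar>" using norming e by blast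
    have "f (e + t *\<^sub>R v) = f e"
      using kills[OF f(1)] linear_add[OF lin[OF f(1)]] linear_scale[OF lin[OF f(1)]] by simp
    moreover have "\<bar>f (e + t *\<^sub>R v)\<bar> \<le> norm (e + t *\<^sub>R v)"
      using contr[OF f(1)] by (simp add: contractive_functional_def)
    ultimately show ?thesis using f(2) by linarith
  qed simp
  have span_eq: "span (x(n := v) ` {..<Suc n}) = span (insert v E)"
  proof -
    have "x(n := v) ` {..<Suc n} = insert v (x ` {..<n})"
      by (auto simp: lessThan_Suc)
    then show ?thesis by (simp add: E_def span_insert_span)
  qed
  have cpt': "compact {u \<in> span (insert v E). norm u \<le> 1}"
    using compact_unit_ball_insert[OF _ cpt v separated] by (simp add: E_def)
  obtain \<Psi> where \<Psi>: "finite \<Psi>" "\<And>f. f \<in> \<Psi> \<Longrightarrow> contractive_functional f"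
    "\<And>u. u \<in> span (insert v E) \<Longrightarrow> u \<noteq> 0 \<Longrightarrow> \<exists>f\<in>\<Psi>. norm u \<le> 2 * \<bar>f u\<bar>"
    using finite_norming_set[OF subspace_span cpt'] by blast
  have "\<exists>f\<in>\<Phi> \<union> \<Psi>. norm u \<le> 2 * \<bar>f u\<bar>" if "u \<in> span (insert v E)" "u \<noteq> 0" for u
    using \<Psi>(3)[OF that] by blast
  then have "mazur_stage (Suc n) (x(n := v)) (\<Phi> \<union> \<Psi>)"
    unfolding mazur_stage_def span_eq
    using fin \<Psi>(1,2) contr units v cpt' by (auto simp: less_Suc_eq)
  then show ?thesis using kills by (intro that) auto
qed

definition basic_sequence :: "real \<Rightarrow> (nat \<Rightarrow> 'a::real_normed_vector) \<Rightarrow> bool" where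
  "basic_sequence C X \<longleftrightarrow> (\<forall>i. norm (X i) = 1) \<and>
     (\<forall>M N c. M \<le> N \<longrightarrow> norm (\<Sum>i<M. c i *\<^sub>R X i) \<le> C * norm (\<Sum>i<N. c i *\<^sub>R X i))"

lemma mazur_sequence:
  assumes inf: "infinite_dimensional TYPE('a::real_normed_vector)"
  obtains x :: "nat \<Rightarrow> nat \<Rightarrow> 'a::real_normed_vector" and \<Phi>
  where "\<And>n. mazur_stage n (x n) (\<Phi> n)"
    and "\<And>n i. i < n \<Longrightarrow> x (Suc n) i = x n i"
    and "\<And>n. \<Phi> n \<subseteq> \<Phi> (Suc n)"
    and "\<And>n f. f \<in> \<Phi> n \<Longrightarrow> f (x (Suc n) n) = 0"
proof -
  define P where "P n p \<longleftrightarrow> mazur_stage n (fst p) (snd p)"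
    for n and p :: "(nat \<Rightarrow> 'a) \<times> ('a \<Rightarrow> real) set"
  define Q where "Q n p q \<longleftrightarrow> (\<forall>i<n. fst q i = fst p i) \<and> snd p \<subseteq> snd q \<and>
      (\<forall>f\<in>snd p. f (fst q n) = 0)"
    for n and p q :: "(nat \<Rightarrow> 'a) \<times> ('a \<Rightarrow> real) set"
  have "\<exists>q. P (Suc n) q \<and> Q n p q" if "P n p" for n p
  proof -
    from that have "mazur_stage n (fst p) (snd p)" by (simp add: P_def)
    then obtain v \<Phi>' where "mazur_stage (Suc n) ((fst p)(n := v)) \<Phi>'" "snd p \<subseteq> \<Phi>'"
      "\<And>f. f \<in> snd p \<Longrightarrow> f v = 0"
      by (rule mazur_stage_step[OF inf]) blast
    then show ?thesis
      by (intro exI[of _ "((fst p)(n := v), \<Phi>')"]) (simp add: P_def Q_def)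
  qed
  moreover have "P 0 (\<lambda>_. 0, {})" by (simp add: P_def mazur_stage_0)
  ultimately obtain F where "\<And>n. P n (F n) \<and> Q n (F n) (F (Suc n))"
    using dependent_nat_choice[of P Q] by blast
  then show ?thesis
    by (intro that[of "\<lambda>n. fst (F n)" "\<lambda>n. snd (F n)"]) (auto simp: P_def Q_def)
qed

lemma truncation_bound:
  fixes X :: "nat \<Rightarrow> 'a::real_normed_vector"
  assumes stage: "mazur_stage M X \<Phi>" and kills: "\<And>f i. f \<in> \<Phi> \<Longrightarrow> M \<le> i \<Longrightarrow> f (X i) = 0"
    and "M \<le> N"
  shows "norm (\<Sum>i<M. c i *\<^sub>R X i) \<le> 2 * norm (\<Sum>i<N. c i *\<^sub>R X i)"
proof -
  define e where "e = (\<Sum>i<M. c i *\<^sub>R X i)"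
  define r where "r = (\<Sum>i\<in>{M..<N}. c i *\<^sub>R X i)"
  have split: "(\<Sum>i<N. c i *\<^sub>R X i) = e + r"
    using \<open>M \<le> N\<close> unfolding e_def r_def
    by (metis lessThan_atLeast0 sum.atLeastLessThan_concat zero_le)
  have "norm e \<le> 2 * norm (e + r)"
  proof (cases "e = 0")
    case False
    have "e \<in> span (X ` {..<M})"
      unfolding e_def by (intro span_sum span_scale span_base) auto
    then obtain f where f: "f \<in> \<Phi>" "norm e \<le> 2 * \<bar>f e\<bar>"
      using stage False by (auto simp: mazur_stage_def)
    have lin: "linear f" and bound: "\<bar>f (e + r)\<bar> \<le> norm (e + r)"
      using stage f(1) by (auto simp: mazur_stage_def contractive_functional_def)
    have "f r = 0"
      unfolding r_def using kills[OF f(1)]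
      by (simp add: linear_sum[OF lin] linear_scale[OF lin])
    then have "f (e + r) = f e" by (simp add: linear_add[OF lin])
    then show ?thesis using f(2) bound by simp
  qed simp
  then show ?thesis using split by (simp add: e_def)
qed

lemma mazur_basic_sequence:
  assumes inf: "infinite_dimensional TYPE('a::real_normed_vector)"
  obtains X :: "nat \<Rightarrow> 'a::real_normed_vector" where "basic_sequence 2 X"
proof -
  obtain x :: "nat \<Rightarrow> nat \<Rightarrow> 'a" and \<Phi> where stage: "\<And>n. mazur_stage n (x n) (\<Phi> n)"
    and extends: "\<And>n i. i < n \<Longrightarrow> x (Suc n) i = x n i"
    and grows: "\<And>n. \<Phi> n \<subseteq> \<Phi> (Suc n)"
    and kills: "\<And>n f. f \<in> \<Phi> n \<Longrightarrow> f (x (Suc n) n) = 0"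
    using mazur_sequence[OF inf] by blast
  define X where "X i = x (Suc i) i" for i
  have stable: "x m i = X i" if "i < m" for m i
    using that
  proof (induction m)
    case (Suc m)
    then show ?case
      using extends[of i m] by (cases "i = m") (auto simp: X_def)
  qed simp
  have X_kills: "f (X i) = 0" if "M \<le> i" "f \<in> \<Phi> M" for M i f
    using kills[of f i] lift_Suc_mono_le[of \<Phi>, OF grows that(1)] that(2) by (auto simp: X_def)
  have "norm (X i) = 1" for i
    using stage[of "Suc i"] by (simp add: mazur_stage_def X_def)
  moreover have "norm (\<Sum>i<M. c i *\<^sub>R X i) \<le> 2 * norm (\<Sum>i<N. c i *\<^sub>R X i)"
    if "M \<le> N" for M N c
  proof (rule truncation_bound)
    have "x M ` {..<M} = X ` {..<M}" using stable by auto
    then show "mazur_stage M X (\<Phi> M)"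
      using stage[of M] stable by (simp add: mazur_stage_def)
  qed (use that X_kills in auto)
  ultimately show ?thesis
    by (intro that[of X]) (simp add: basic_sequence_def)
qed

definition shrunk :: "(nat \<Rightarrow> 'a::real_vector) \<Rightarrow> nat \<Rightarrow> 'a" where
  "shrunk X i = (1 - 1 / real (i + 2)) *\<^sub>R X i"

text \<open>The union of the convex hulls of the initial segments \<open>y 0, \<dots>, y (N - 1)\<close>
  (i.e.\ the convex hull of the range of \<open>y\<close>).\<close>
definition hull_of_segments :: "(nat \<Rightarrow> 'a::real_vector) \<Rightarrow> 'a set" where
  "hull_of_segments y = (\<Union>N. convex hull (y ` {..<N}))"

lemma convex_hull_initial_segment:
  fixes y :: "nat \<Rightarrow> 'a::real_vector"
  shows "convex hull (y ` {..<N}) =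
    {\<Sum>i<N. t i *\<^sub>R y i | t. (\<forall>i<N. 0 \<le> t i) \<and> (\<Sum>i<N. t i) = 1}"
proof -
  have "y ` {..<N} = (\<Union>i\<in>{..<N}. {y i})" by auto
  then have hull: "convex hull (y ` {..<N}) =
    {\<Sum>i<N. c i *\<^sub>R s i | c s. (\<forall>i\<in>{..<N}. 0 \<le> c i) \<and> sum c {..<N} = 1 \<and>
       (\<forall>i\<in>{..<N}. s i \<in> {y i})}"
    using convex_hull_finite_union[of "{..<N}" "\<lambda>i. {y i}"] by simp
  have "(\<Sum>i<N. c i *\<^sub>R s i) = (\<Sum>i<N. c i *\<^sub>R y i)" if "\<forall>i\<in>{..<N}. s i \<in> {y i}" for c s
    using that by (intro sum.cong) auto
  then show ?thesis
    unfolding hull by (auto 0 3)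
qed

lemma convex_hull_segment_mono:
  fixes y :: "nat \<Rightarrow> 'a::real_vector"
  assumes "N \<le> N'"
  shows "convex hull (y ` {..<N}) \<subseteq> convex hull (y ` {..<N'})"
proof -
  have "{..<N} \<subseteq> {..<N'}" using assms by simp
  then show ?thesis by (intro hull_mono image_mono)
qed

lemma convex_hull_of_segments: "convex (hull_of_segments y)"
proof (rule convexI)
  fix v w and u1 u2 :: real
  assume "v \<in> hull_of_segments y" "w \<in> hull_of_segments y"
    and u: "0 \<le> u1" "0 \<le> u2" "u1 + u2 = 1"
  then obtain N1 N2 where "v \<in> convex hull (y ` {..<N1})" "w \<in> convex hull (y ` {..<N2})"
    by (auto simp: hull_of_segments_def)
  then have "v \<in> convex hull (y ` {..<max N1 N2})" "w \<in> convex hull (y ` {..<max N1 N2})"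
    using convex_hull_segment_mono[of N1 "max N1 N2" y]
      convex_hull_segment_mono[of N2 "max N1 N2" y] by auto
  then have "u1 *\<^sub>R v + u2 *\<^sub>R w \<in> convex hull (y ` {..<max N1 N2})"
    using u convex_convex_hull by (blast intro: convexD)
  then show "u1 *\<^sub>R v + u2 *\<^sub>R w \<in> hull_of_segments y"
    by (auto simp: hull_of_segments_def)
qed

lemma norm_shrunk_combination:
  fixes X :: "nat \<Rightarrow> 'a::real_normed_vector"
  assumes X: "\<And>i. norm (X i) = 1" and t: "\<And>i. i < N \<Longrightarrow> 0 \<le> t i" "(\<Sum>i<N. t i) = 1"
    and "M \<le> N"
  shows "norm (\<Sum>i<N. t i *\<^sub>R shrunk X i) + (\<Sum>i<M. t i) / real (M + 2) \<le> 1"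
proof -
  have "norm (\<Sum>i<N. t i *\<^sub>R shrunk X i) \<le> (\<Sum>i<N. t i * (1 - 1 / real (i + 2)))"
    using norm_sum[of "\<lambda>i. t i *\<^sub>R shrunk X i" "{..<N}"] t(1) X
    by (simp add: shrunk_def)
  also have "\<dots> = 1 - (\<Sum>i<N. t i / real (i + 2))"
    using t(2) by (simp add: right_diff_distrib sum_subtractf)
  finally have total: "norm (\<Sum>i<N. t i *\<^sub>R shrunk X i) \<le> 1 - (\<Sum>i<N. t i / real (i + 2))" .
  have "(\<Sum>i<M. t i) / real (M + 2) = (\<Sum>i<M. t i / real (M + 2))"
    by (simp add: sum_divide_distrib)
  also have "\<dots> \<le> (\<Sum>i<M. t i / real (i + 2))"
    using t(1) \<open>M \<le> N\<close> by (intro sum_mono divide_left_mono) auto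
  also have "\<dots> \<le> (\<Sum>i<N. t i / real (i + 2))"
    using t(1) \<open>M \<le> N\<close> by (intro sum_mono2) auto
  finally show ?thesis using total by linarith
qed

lemma norm_shrunk_sum_le:
  fixes X :: "nat \<Rightarrow> 'a::real_normed_vector"
  assumes X: "\<And>i. norm (X i) = 1" and t: "\<And>i. i < M \<Longrightarrow> 0 \<le> t i"
  shows "norm (\<Sum>i<M. t i *\<^sub>R shrunk X i) \<le> (\<Sum>i<M. t i)"
proof -
  have "norm (\<Sum>i<M. t i *\<^sub>R shrunk X i) \<le> (\<Sum>i<M. t i * (1 - 1 / real (i + 2)))"
    using norm_sum[of "\<lambda>i. t i *\<^sub>R shrunk X i" "{..<M}"] t X
    by (simp add: shrunk_def)
  also have "\<dots> \<le> (\<Sum>i<M. t i)"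
    using t by (intro sum_mono) (simp add: mult_left_le)
  finally show ?thesis .
qed

lemma truncated_difference:
  fixes X :: "nat \<Rightarrow> 'a::real_normed_vector"
  assumes X: "basic_sequence C X" and "M \<le> N"
  shows "norm ((\<Sum>i<M. t i *\<^sub>R shrunk X i) - (\<Sum>i<M. s i *\<^sub>R shrunk X i))
    \<le> C * norm ((\<Sum>i<N. t i *\<^sub>R shrunk X i) - (\<Sum>i<M. s i *\<^sub>R shrunk X i))"
proof -
  define a where "a i = 1 - 1 / real (i + 2)" for i
  define c where "c i = t i * a i - (if i < M then s i * a i else 0)" for i
  have shrunk_a: "shrunk X i = a i *\<^sub>R X i" for i
    by (simp add: shrunk_def a_def)
  have cut: "(\<Sum>i<L. (if i < M then s i * a i else 0) *\<^sub>R X i) = (\<Sum>i<M. s i *\<^sub>R shrunk X i)"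
    if "M \<le> L" for L
  proof -
    have "(\<Sum>i<L. (if i < M then s i * a i else 0) *\<^sub>R X i) =
        (\<Sum>i<L. if i < M then (s i * a i) *\<^sub>R X i else 0)"
      by (rule sum.cong) auto
    moreover have "{i \<in> {..<L}. i < M} = {..<M}" using that by auto
    ultimately show ?thesis
      using sum.inter_filter[of "{..<L}" "\<lambda>i. (s i * a i) *\<^sub>R X i" "\<lambda>i. i < M"]
      by (simp add: shrunk_a)
  qed
  have "(\<Sum>i<L. c i *\<^sub>R X i) = (\<Sum>i<L. t i *\<^sub>R shrunk X i) - (\<Sum>i<M. s i *\<^sub>R shrunk X i)"
    if "M \<le> L" for L
    using cut[OF that]
    by (simp add: c_def shrunk_a scaleR_diff_left sum_subtractf)
  then show ?thesis
    using X \<open>M \<le> N\<close> by (metis basic_sequence_def order_refl)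
qed

lemma basic_sequence_constant_ge_1:
  assumes "basic_sequence C X"
  shows "1 \<le> C"
proof -
  have units: "\<And>i. norm (X i) = 1"
    and trunc: "\<And>M N c. M \<le> N \<Longrightarrow> norm (\<Sum>i<M. c i *\<^sub>R X i) \<le> C * norm (\<Sum>i<N. c i *\<^sub>R X i)"
    using assms by (simp_all add: basic_sequence_def)
  show ?thesis
    using trunc[of 1 1 "\<lambda>_. 1"] units[of 0] by simp
qed

lemma hull_of_segments_combination:
  fixes y :: "nat \<Rightarrow> 'a::real_vector"
  assumes "v \<in> hull_of_segments y"
  obtains N t where "M \<le> N" "\<forall>i<N. 0 \<le> t i" "(\<Sum>i<N. t i) = 1" "v = (\<Sum>i<N. t i *\<^sub>R y i)"
proof -
  obtain N0 where "v \<in> convex hull (y ` {..<N0})"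
    using assms by (auto simp: hull_of_segments_def)
  then have "v \<in> convex hull (y ` {..<max N0 M})"
    using convex_hull_segment_mono[of N0 "max N0 M" y] by auto
  then show ?thesis
    using that[of "max N0 M"] by (auto simp: convex_hull_initial_segment)
qed

lemma norm_truncation_le:
  fixes X :: "nat \<Rightarrow> 'a::real_normed_vector"
  assumes X: "\<And>i. norm (X i) = 1" and t: "\<forall>i<N. 0 \<le> t i" "(\<Sum>i<N. t i) = 1"
    and "M \<le> N"
  shows "norm (\<Sum>i<M. t i *\<^sub>R shrunk X i) \<le> real (M + 2) * (1 - norm (\<Sum>i<N. t i *\<^sub>R shrunk X i))"
proof -
  have "norm (\<Sum>i<M. t i *\<^sub>R shrunk X i) \<le> (\<Sum>i<M. t i)"
    using norm_shrunk_sum_le[of X M t, OF X] t(1) \<open>M \<le> N\<close> by simp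
  also have "(\<Sum>i<M. t i) \<le> real (M + 2) * (1 - norm (\<Sum>i<N. t i *\<^sub>R shrunk X i))"
    using norm_shrunk_combination[of X N t M, OF X _ t(2) \<open>M \<le> N\<close>] t(1)
    by (simp add: field_simps)
  finally show ?thesis .
qed

text \<open>A point \<open>k\<close> of norm \<open>\<ge> 1\<close> would be approximated by \<open>w\<close>, supported below some
  \<open>M\<close>, and much better by \<open>v\<close>; then \<open>v\<close> has a small truncation \<open>T\<close> at \<open>M\<close>, while \<open>T - w\<close> is
  the truncation of \<open>v - w\<close>, so \<open>w\<close> itself would be small.\<close>
lemma hull_of_segments_norm_lt_1:
  fixes X :: "nat \<Rightarrow> 'a::real_normed_vector"
  assumes X: "basic_sequence C X" and k: "k \<in> closure (hull_of_segments (shrunk X))"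
  shows "norm k < 1"
proof (rule ccontr)
  assume "\<not> norm k < 1"
  then have k1: "1 \<le> norm k" by simp
  have units: "\<And>i. norm (X i) = 1"
    using X by (simp add: basic_sequence_def)
  have C1: "1 \<le> C" using basic_sequence_constant_ge_1[OF X] .
  define \<epsilon> where "\<epsilon> = 1 / (4 * (C + 1))"
  have \<epsilon>: "0 < \<epsilon>" using C1 by (simp add: \<epsilon>_def)
  obtain w where w_in: "w \<in> hull_of_segments (shrunk X)" and wk: "dist w k < \<epsilon>"
    using k \<epsilon> unfolding closure_approachable by blast
  obtain M s where w: "w = (\<Sum>i<M. s i *\<^sub>R shrunk X i)"
    using w_in by (auto simp: hull_of_segments_def convex_hull_initial_segment)
  define \<delta> where "\<delta> = \<epsilon> / real (M + 2)"
  have \<delta>: "0 < \<delta>" "\<delta> \<le> \<epsilon>" using \<epsilon> by (auto simp: \<delta>_def divide_le_eq)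
  obtain v where v_in: "v \<in> hull_of_segments (shrunk X)" and vk: "dist v k < \<delta>"
    using k \<delta>(1) unfolding closure_approachable by blast
  obtain N t where MN: "M \<le> N" and t: "\<forall>i<N. 0 \<le> t i" "(\<Sum>i<N. t i) = 1"
    and v: "v = (\<Sum>i<N. t i *\<^sub>R shrunk X i)"
    using v_in by (rule hull_of_segments_combination)
  define T where "T = (\<Sum>i<M. t i *\<^sub>R shrunk X i)"
  have "1 - norm v < \<delta>"
    using k1 vk norm_triangle_ineq3[of k v] by (simp add: dist_norm norm_minus_commute)
  have "norm T \<le> real (M + 2) * (1 - norm v)"
    using norm_truncation_le[OF units t MN] by (simp add: T_def v)
  also have "\<dots> < real (M + 2) * \<delta>"
    using \<open>1 - norm v < \<delta>\<close> by (intro mult_strict_left_mono) auto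
  also have "\<dots> = \<epsilon>" by (simp add: \<delta>_def)
  finally have T: "norm T < \<epsilon>" .
  have "norm (T - w) \<le> C * norm (v - w)"
    using truncated_difference[OF X MN, of t s] by (simp add: T_def w v)
  also have "norm (v - w) < 2 * \<epsilon>"
    using vk wk \<delta>(2) norm_triangle_ineq[of "v - k" "k - w"]
    by (simp add: dist_norm norm_minus_commute)
  then have "C * norm (v - w) \<le> C * (2 * \<epsilon>)"
    using C1 by (intro mult_left_mono) auto
  finally have "norm w < \<epsilon> + C * (2 * \<epsilon>)"
    using T norm_triangle_ineq4[of T "T - w"] by simp
  moreover have "1 - \<epsilon> < norm w"
    using k1 wk norm_triangle_ineq3[of k w] by (simp add: dist_norm norm_minus_commute)
  ultimately have "1 < \<epsilon> * (2 + 2 * C)" by (simp add: algebra_simps)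
  also have "\<epsilon> * (2 + 2 * C) = 1 / 2"
    using C1 by (simp add: \<epsilon>_def field_simps)
  finally show False by simp
qed

lemma shrunk_in_hull_of_segments:
  fixes y :: "nat \<Rightarrow> 'a::real_normed_vector"
  shows "y n \<in> closure (hull_of_segments y)"
proof -
  have "y n \<in> y ` {..<Suc n}" by simp
  then have "y n \<in> convex hull (y ` {..<Suc n})"
    by (rule hull_inc)
  then have "y n \<in> hull_of_segments y"
    unfolding hull_of_segments_def by blast
  then show ?thesis
    by (rule subsetD[OF closure_subset])
qed

text \<open>The supremum of the norms over the set is approached by the shrunk vectors but,
  by the previous lemma, never attained: the set is not remotal from the origin.\<close>
lemma not_remotal_hull_of_segments:
  fixes X :: "nat \<Rightarrow> 'a::real_normed_vector"
  assumes X: "basic_sequence C X"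
  shows "\<not> remotal (closure (hull_of_segments (shrunk X)))"
proof
  define K where "K = closure (hull_of_segments (shrunk X))"
  assume "remotal K"
  then have "remotal_from 0 K" by (simp add: remotal_def)
  then obtain c0 where c0: "c0 \<in> K" "norm (0 - c0) = farthest_dist 0 K"
    by (auto simp: remotal_from_def)
  have lt1: "norm c < 1" if "c \<in> K" for c
    using hull_of_segments_norm_lt_1[OF X] that by (simp add: K_def)
  obtain n :: nat where n: "0 < n" "inverse (real n) < 1 - norm c0"
    using ex_inverse_of_nat_less[of "1 - norm c0"] lt1[OF c0(1)] by auto
  have "1 / real (n + 2) \<le> inverse (real n)"
    using n(1) by (simp add: inverse_eq_divide frac_le)
  then have "norm c0 < 1 - 1 / real (n + 2)"
    using n(2) by linarith
  also have "1 - 1 / real (n + 2) = norm (0 - shrunk X n)"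
    using X by (simp add: basic_sequence_def shrunk_def)
  also have "\<dots> \<le> farthest_dist 0 K"
    unfolding farthest_dist_def
  proof (rule cSUP_upper)
    show "shrunk X n \<in> K"
      unfolding K_def by (rule shrunk_in_hull_of_segments)
    show "bdd_above ((\<lambda>c. norm (0 - c)) ` K)"
      using lt1 by (intro bdd_aboveI[of _ 1]) (auto intro: less_imp_le)
  qed
  finally show False using c0(2) by simp
qed

theorem theorem7:
  assumes "infinite_dimensional TYPE('a::banach)"
  shows "\<exists>K::'a set. K \<noteq> {} \<and> closed K \<and> bounded K \<and> convex K \<and> \<not> remotal K"
proof -
  obtain X :: "nat \<Rightarrow> 'a" where X: "basic_sequence 2 X"
    using mazur_basic_sequence[OF assms] by blast
  define K where "K = closure (hull_of_segments (shrunk X))"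
  have "K \<noteq> {}"
    using shrunk_in_hull_of_segments[of "shrunk X" 0] by (auto simp: K_def)
  moreover have "bounded K"
    using hull_of_segments_norm_lt_1[OF X]
    by (auto simp: K_def bounded_iff intro: less_imp_le)
  moreover have "convex K"
    unfolding K_def by (intro convex_closure convex_hull_of_segments)
  moreover have "\<not> remotal K"
    unfolding K_def by (rule not_remotal_hull_of_segments[OF X])
  ultimately show ?thesis
    by (auto simp: K_def)
qed

end
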